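(* Let $E: y^2=x^3+Ax+B$ ($A,B\in\mathbb{Z}$) be an elliptic curve over $\mathbb{Q}$. There exists $D_0$ depending only on $E$ such that for every squarefree $D\ge D_0$ the following holds, where $E_D: y^2=x^3+D^2Ax+D^3B$: if $P,Q\in E_D(\mathbb{Z})$ satisfy $20\log D\le \hat h(P),\hat h(Q)\le 2200\log D$, $x(P)\ne x(Q)$, and \[\max\left\{\frac{\hat h(Q)}{\hat h(P)},\frac{\hat h(P)}{\hat h(Q)}\right\}\le 1.1,\] then $\cos\theta_{P,Q}\le 0.63$.
   Context: $h$ is the absolute logarithmic Weil height on $\overline{\mathbb{Q}}$; for a point $P$ on an elliptic curve in Weierstrass form, $\hat h(P)=\lim_{n\to\infty} h(x(2^nP))/4^n$ (the canonical height, not normalized by the factor $1/2$). $E_D(\mathbb{Z})$ is the set of points of $E_D$ with integer coordinates. For non-torsion $P,Q$, $\cos\theta_{P,Q}:=\dfrac{\hat h(P+Q)-\hat h(P)-\hat h(Q)}{2\sqrt{\hat h(P)\hat h(Q)}}$. *)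

theory Defs
  imports "HOL-Computational_Algebra.Squarefree" Complex_Main
begin

datatype ept = Inf | Pt rat rat

fun on_curve :: "rat \<Rightarrow> rat \<Rightarrow> ept \<Rightarrow> bool" where
  "on_curve a b Inf = True"
| "on_curve a b (Pt x y) = (y^2 = x^3 + a * x + b)"

fun ec_add :: "rat \<Rightarrow> rat \<Rightarrow> ept \<Rightarrow> ept \<Rightarrow> ept" where
  "ec_add a b Inf Q = Q"
| "ec_add a b (Pt x1 y1) Inf = Pt x1 y1"
| "ec_add a b (Pt x1 y1) (Pt x2 y2) =
     (if x1 = x2 \<and> y1 = - y2 then Inf
      else let l = (if x1 = x2 then (3 * x1^2 + a) / (2 * y1) else (y2 - y1) / (x2 - x1));
               x3 = l^2 - x1 - x2;
               y3 = l * (x1 - x3) - y1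
           in Pt x3 y3)"

definition weil_height :: "rat \<Rightarrow> real" where
  "weil_height r = (case quotient_of r of (p, q) \<Rightarrow> ln (real_of_int (max \<bar>p\<bar> \<bar>q\<bar>)))"

fun x_height :: "ept \<Rightarrow> real" where
  "x_height Inf = 0"
| "x_height (Pt x y) = weil_height x"

text \<open>Canonical height (not normalized by 1/2): lim h(x(2^n P)) / 4^n.\<close>
definition can_height :: "rat \<Rightarrow> rat \<Rightarrow> ept \<Rightarrow> real" where
  "can_height a b P = lim (\<lambda>n. x_height (((\<lambda>R. ec_add a b R R) ^^ n) P) / 4 ^ n)"

definition integral_point :: "rat \<Rightarrow> rat \<Rightarrow> ept \<Rightarrow> bool" where
  "integral_point a b P = (\<exists>x y. P = Pt x y \<and> x \<in> \<int> \<and> y \<in> \<int> \<and> on_curve a b P)"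

definition cos_angle :: "rat \<Rightarrow> rat \<Rightarrow> ept \<Rightarrow> ept \<Rightarrow> real" where
  "cos_angle a b P Q =
     (can_height a b (ec_add a b P Q) - can_height a b P - can_height a b Q)
       / (2 * sqrt (can_height a b P * can_height a b Q))"

fun xcoord :: "ept \<Rightarrow> rat" where
  "xcoord Inf = 0" | "xcoord (Pt x y) = x"

end

theory Submission
  imports Defs
begin

(* The substitution x -> x/D turns the doubling map of E_D into the duplication map
   t -> x_dup t of E. The numerator and denominator of x_dup are binary quartic forms whose
   resultant is the discriminant, so |h(x_dup t) - 4 h(t)| <= C, and Tate's telescoping
   argument gives |h^(P) - h(x(P)/D)| <= C/3 for every point P of E_D with h^(P) > 0.
   For an integral point P = (X, Y) with h^(P) >= 20 log D this forces X > D^2, hence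
   Y^2 <= 2 X^3. For a second such point Q = (X', Y') with X' < X,
   x(P+Q)/D = ((Y'-Y)^2 - (X+X')(X'-X)^2) / (D (X'-X)^2), and gcd(X, D) divides the numerator;
   this gives h^(P+Q) <= 3 max(h^(P), h^(Q)) + 2.1 log D once D is large. *)

section \<open>Heights of rational numbers\<close>

lemma weil_height_of_int_div:
  fixes n d :: int
  assumes "d \<noteq> 0"
  shows "weil_height (of_int n / of_int d) = ln (real_of_int (max \<bar>n\<bar> \<bar>d\<bar>) / real_of_int (gcd n d))"
proof -
  define g where "g = gcd n d"
  have "g > 0" using assms by (simp add: g_def)
  have reduced: "real_of_int (max \<bar>n div c\<bar> \<bar>d div c\<bar>) = real_of_int (max \<bar>n\<bar> \<bar>d\<bar>) / real_of_int g"
    if "c = g \<or> c = - g" for c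
  proof -
    have "c dvd n" "c dvd d" "c \<noteq> 0" using that \<open>g > 0\<close> by (auto simp: g_def)
    then have "real_of_int \<bar>n div c\<bar> = \<bar>real_of_int n\<bar> / real_of_int g"
      and "real_of_int \<bar>d div c\<bar> = \<bar>real_of_int d\<bar> / real_of_int g"
      using that \<open>g > 0\<close> by (auto simp: of_int_div)
    then show ?thesis using \<open>g > 0\<close>
      by (simp only: of_int_max of_int_abs max_divide_distrib_right, simp)
  qed
  have Fract: "of_int n / of_int d = Fract n d" by (simp add: Fract_of_int_quotient)
  show ?thesis
  proof (cases "d > 0")
    case True
    then show ?thesis unfolding weil_height_def Fract quotient_of_Fract normalize_def
      using reduced[of g] by (simp add: Let_def g_def)
  next
    case False
    then show ?thesis unfolding weil_height_def Fract quotient_of_Fract normalize_def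
      using reduced[of "-g"] assms by (simp add: Let_def g_def)
  qed
qed

lemma weil_height_quotient_of:
  assumes "quotient_of r = (p, q)"
  shows "weil_height r = ln (real_of_int (max \<bar>p\<bar> q))"
  using assms quotient_of_denom_pos[OF assms] by (simp add: weil_height_def)

lemma weil_height_nonneg: "weil_height r \<ge> 0"
proof -
  obtain p q where pq: "quotient_of r = (p, q)" by (cases "quotient_of r")
  then have "q > 0" by (rule quotient_of_denom_pos)
  then show ?thesis by (simp add: weil_height_quotient_of[OF pq])
qed

lemma weil_height_of_int_div_le:
  fixes n d c :: int
  assumes "d \<noteq> 0" "c > 0" "c dvd n" "c dvd d"
  shows "weil_height (of_int n / of_int d) \<le> ln (real_of_int (max \<bar>n\<bar> \<bar>d\<bar>) / real_of_int c)"
proof -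
  have "gcd n d > 0" using assms(1) by simp
  have "c \<le> gcd n d" using assms by (intro zdvd_imp_le) auto
  moreover have "max \<bar>n\<bar> \<bar>d\<bar> \<ge> 1" using assms(1) by linarith
  ultimately have "real_of_int (max \<bar>n\<bar> \<bar>d\<bar>) / real_of_int (gcd n d)
      \<le> real_of_int (max \<bar>n\<bar> \<bar>d\<bar>) / real_of_int c"
    using assms(2) \<open>gcd n d > 0\<close> by (intro divide_left_mono) auto
  moreover have "real_of_int (max \<bar>n\<bar> \<bar>d\<bar>) / real_of_int (gcd n d) > 0"
    using assms(1) \<open>max \<bar>n\<bar> \<bar>d\<bar> \<ge> 1\<close> by simp
  ultimately show ?thesis unfolding weil_height_of_int_div[OF assms(1)] by (intro ln_mono) auto
qed

lemma weil_height_mult_div_le: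
  fixes k l :: int
  assumes "k \<noteq> 0" "l \<noteq> 0"
  shows "weil_height (of_int k * r / of_int l) \<le> ln (real_of_int (max \<bar>k\<bar> \<bar>l\<bar>)) + weil_height r"
proof -
  obtain p q where pq: "quotient_of r = (p, q)" by (cases "quotient_of r")
  have "q > 0" using quotient_of_denom_pos[OF pq] .
  have r: "of_int k * r / of_int l = of_int (k*p) / (of_int (l*q) :: rat)"
    using \<open>q > 0\<close> assms by (simp add: quotient_of_div[OF pq])
  have "l*q \<noteq> 0" using assms \<open>q > 0\<close> by simp
  have "max \<bar>k*p\<bar> \<bar>l*q\<bar> \<le> (max \<bar>k\<bar> \<bar>l\<bar>) * (max \<bar>p\<bar> \<bar>q\<bar>)"
    by (auto simp: abs_mult intro: mult_mono)
  then have "real_of_int (max \<bar>k*p\<bar> \<bar>l*q\<bar>) \<le> real_of_int (max \<bar>k\<bar> \<bar>l\<bar>) * real_of_int (max \<bar>p\<bar> \<bar>q\<bar>)"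
    by (metis of_int_le_iff of_int_mult)
  moreover have "max \<bar>k*p\<bar> \<bar>l*q\<bar> > 0" using \<open>l*q \<noteq> 0\<close> by (simp add: less_max_iff_disj)
  ultimately have "ln (real_of_int (max \<bar>k*p\<bar> \<bar>l*q\<bar>))
      \<le> ln (real_of_int (max \<bar>k\<bar> \<bar>l\<bar>) * real_of_int (max \<bar>p\<bar> \<bar>q\<bar>))"
    by (intro ln_mono) auto
  also have "\<dots> = ln (real_of_int (max \<bar>k\<bar> \<bar>l\<bar>)) + weil_height r"
    using assms \<open>q > 0\<close> by (subst ln_mult) (auto simp: weil_height_quotient_of[OF pq])
  finally show ?thesis
    using weil_height_of_int_div_le[OF \<open>l*q \<noteq> 0\<close>, of 1 "k*p"] r by simp
qed

lemma weil_height_of_int_mult: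
  fixes k :: int
  assumes "k \<noteq> 0"
  shows "\<bar>weil_height (of_int k * r) - weil_height r\<bar> \<le> ln (real_of_int \<bar>k\<bar>)"
proof -
  have "max \<bar>k\<bar> \<bar>1\<bar> = \<bar>k\<bar>" "max \<bar>1\<bar> \<bar>k\<bar> = \<bar>k\<bar>" using assms by auto
  then show ?thesis
    using weil_height_mult_div_le[OF assms, of 1 r] weil_height_mult_div_le[of 1 k "of_int k * r"] assms
    by (simp add: abs_le_iff)
qed

lemma weil_height_of_int_div_le_power:
  fixes n d m K :: int
  assumes "d \<noteq> 0" "1 \<le> m" "max \<bar>n\<bar> \<bar>d\<bar> \<le> K * m^k"
  shows "weil_height (of_int n / of_int d) \<le> ln K + k * ln m"
proof -
  have "1 \<le> max \<bar>n\<bar> \<bar>d\<bar>" "0 < m^k" using assms(1,2) by auto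
  then have "0 < K * m^k" using assms(3) by linarith
  then have "0 < K" using \<open>0 < m^k\<close> zero_less_mult_pos2 by blast
  have "real_of_int (max \<bar>n\<bar> \<bar>d\<bar>) \<le> real_of_int K * real_of_int m ^ k"
    using assms(3) by (metis of_int_le_iff of_int_mult of_int_power)
  then have "ln (real_of_int (max \<bar>n\<bar> \<bar>d\<bar>)) \<le> ln (real_of_int K * real_of_int m ^ k)"
    using \<open>1 \<le> max \<bar>n\<bar> \<bar>d\<bar>\<close> by (intro ln_mono) auto
  moreover have "weil_height (of_int n / of_int d) \<le> ln (real_of_int (max \<bar>n\<bar> \<bar>d\<bar>) / real_of_int 1)"
    using assms(1) by (intro weil_height_of_int_div_le) auto
  ultimately show ?thesis using \<open>0 < K\<close> assms(2) by (simp add: ln_mult ln_realpow)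
qed

lemma weil_height_of_int_div_ge_power:
  fixes n d m \<delta> K :: int
  assumes "d \<noteq> 0" "1 \<le> m" "\<delta> \<noteq> 0" "gcd n d dvd \<delta>" "\<bar>\<delta>\<bar> * m^k \<le> K * max \<bar>n\<bar> \<bar>d\<bar>"
  shows "k * ln m - ln K \<le> weil_height (of_int n / of_int d)"
proof -
  define M g where "M = max \<bar>n\<bar> \<bar>d\<bar>" and "g = gcd n d"
  have "0 < M" "0 < g" "0 < m^k" using assms(1,2) by (auto simp: M_def g_def)
  have "g \<le> \<bar>\<delta>\<bar>" using assms(3,4) by (simp add: g_def zdvd_imp_le)
  have "0 < \<bar>\<delta>\<bar> * m^k" using assms(3) \<open>0 < m^k\<close> by simp
  then have "0 < K * M" using assms(5) unfolding M_def by linarith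
  then have "0 < K" using \<open>0 < M\<close> zero_less_mult_pos2 by blast
  have "\<bar>real_of_int \<delta>\<bar> * real_of_int m ^ k \<le> real_of_int K * real_of_int M"
    using assms(5) unfolding M_def by (metis of_int_le_iff of_int_mult of_int_power of_int_abs)
  then have "real_of_int m ^ k / K \<le> real_of_int M / \<bar>\<delta>\<bar>"
    using assms(3) \<open>0 < K\<close> by (simp add: field_simps)
  also have "\<dots> \<le> real_of_int M / g" using \<open>g \<le> \<bar>\<delta>\<bar>\<close> \<open>0 < g\<close> \<open>0 < M\<close> by (intro divide_left_mono) auto
  finally have "ln (real_of_int m ^ k / K) \<le> ln (real_of_int M / g)"
    using \<open>0 < K\<close> assms(2) by (intro ln_mono) auto
  then show ?thesis
    using weil_height_of_int_div[OF assms(1)] \<open>0 < K\<close> assms(2) by (simp add: M_def g_def ln_div ln_realpow)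
qed

section \<open>Binary forms\<close>

definition binary_form :: "'a::comm_semiring_1 list \<Rightarrow> 'a \<Rightarrow> 'a \<Rightarrow> 'a" where
  "binary_form cs p q = (\<Sum>i<length cs. cs ! i * p ^ (length cs - 1 - i) * q ^ i)"

lemma binary_form_Nil [simp]: "binary_form [] p q = 0"
  by (simp add: binary_form_def)

lemma binary_form_Cons:
  "binary_form (c # cs) p q = c * p ^ length cs + q * binary_form cs p q"
  unfolding binary_form_def length_Cons sum.lessThan_Suc_shift
  by (simp add: sum_distrib_left algebra_simps)

lemma abs_binary_form_le:
  fixes p q m :: "'a::linordered_idom"
  assumes "\<bar>p\<bar> \<le> m" "\<bar>q\<bar> \<le> m"
  shows "\<bar>binary_form cs p q\<bar> \<le> sum_list (map abs cs) * m ^ (length cs - 1)"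
proof (induction cs)
  case Nil
  show ?case by simp
next
  case (Cons c cs)
  have "m \<ge> 0" using assms(1) by linarith
  have "\<bar>c * p ^ length cs\<bar> \<le> \<bar>c\<bar> * m ^ length cs"
    unfolding abs_mult power_abs using assms(1) by (intro mult_left_mono power_mono) auto
  moreover have "\<bar>q * binary_form cs p q\<bar> \<le> sum_list (map abs cs) * m ^ length cs"
  proof (cases cs)
    case Nil
    then show ?thesis by simp
  next
    case (Cons c' cs')
    have "\<bar>q * binary_form cs p q\<bar> \<le> m * (sum_list (map abs cs) * m ^ (length cs - 1))"
      unfolding abs_mult using assms(2) Cons.IH \<open>m \<ge> 0\<close> by (intro mult_mono) auto
    then show ?thesis using Cons by (simp add: algebra_simps)
  qed
  ultimately show ?case by (simp add: binary_form_Cons algebra_simps)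
qed

lemma abs_binary_form_combination_le:
  fixes p q m F G M :: "'a::linordered_idom"
  assumes "\<bar>p\<bar> \<le> m" "\<bar>q\<bar> \<le> m" "\<bar>F\<bar> \<le> M" "\<bar>G\<bar> \<le> M"
    and "length U = Suc n" "length V = Suc n"
  shows "\<bar>binary_form U p q * F + binary_form V p q * G\<bar>
           \<le> (sum_list (map abs U) + sum_list (map abs V)) * m^n * M"
proof -
  have "\<bar>binary_form U p q\<bar> \<le> sum_list (map abs U) * m^n"
    and "\<bar>binary_form V p q\<bar> \<le> sum_list (map abs V) * m^n"
    using abs_binary_form_le[OF assms(1,2), of U] abs_binary_form_le[OF assms(1,2), of V] assms(5,6)
    by simp_all
  then have "\<bar>binary_form U p q * F\<bar> \<le> sum_list (map abs U) * m^n * M"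
    and "\<bar>binary_form V p q * G\<bar> \<le> sum_list (map abs V) * m^n * M"
    unfolding abs_mult using assms(3,4) by (auto intro!: mult_mono order_trans[OF abs_ge_zero])
  then show ?thesis using abs_triangle_ineq[of "binary_form U p q * F"] by (simp add: distrib_right)
qed

section \<open>The duplication map\<close>

definition ec_rhs :: "int \<Rightarrow> int \<Rightarrow> rat \<Rightarrow> rat" where
  "ec_rhs A B t = t^3 + of_int A * t + of_int B"

definition x_dup :: "int \<Rightarrow> int \<Rightarrow> rat \<Rightarrow> rat" where
  "x_dup A B t = (t^4 - 2 * of_int A * t^2 - 8 * of_int B * t + of_int A ^ 2) / (4 * ec_rhs A B t)"

definition dup_num :: "int \<Rightarrow> int \<Rightarrow> int \<Rightarrow> int \<Rightarrow> int" where
  "dup_num A B = binary_form [1, 0, -2*A, -8*B, A^2]"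

definition dup_den :: "int \<Rightarrow> int \<Rightarrow> int \<Rightarrow> int \<Rightarrow> int" where
  "dup_den A B = binary_form [0, 4, 0, 4*A, 4*B]"

lemma binary_form_cubic:
  "binary_form [c0, c1, c2, c3] p q = c0*p^3 + c1*p^2*q + c2*p*q^2 + c3*q^3"
  by (simp add: binary_form_Cons algebra_simps eval_nat_numeral)

lemma binary_form_quartic:
  "binary_form [c0, c1, c2, c3, c4] p q = c0*p^4 + c1*p^3*q + c2*p^2*q^2 + c3*p*q^3 + c4*q^4"
  by (simp add: binary_form_Cons algebra_simps eval_nat_numeral)

lemma x_dup_of_int_div:
  fixes A B p q :: int
  assumes "q \<noteq> 0" "ec_rhs A B (of_int p / of_int q) \<noteq> 0"
  shows "dup_den A B p q \<noteq> 0"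
    and "x_dup A B (of_int p / of_int q) = of_int (dup_num A B p q) / of_int (dup_den A B p q)"
proof -
  define t where "t = (of_int p / of_int q :: rat)"
  have p: "of_int p = t * of_int q" using assms(1) by (simp add: t_def)
  have num: "of_int (dup_num A B p q) = of_int q ^ 4 * (t^4 - 2 * of_int A * t^2 - 8 * of_int B * t + of_int A ^ 2)"
    unfolding dup_num_def
    by (simp add: binary_form_quartic p power_mult_distrib) (simp add: algebra_simps eval_nat_numeral)
  have den: "of_int (dup_den A B p q) = 4 * of_int q ^ 4 * ec_rhs A B t"
    unfolding dup_den_def ec_rhs_def
    by (simp add: binary_form_quartic p power_mult_distrib) (simp add: algebra_simps eval_nat_numeral)
  have "(of_int (dup_den A B p q) :: rat) \<noteq> 0"
    unfolding den using assms by (simp add: t_def)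
  then show "dup_den A B p q \<noteq> 0" by simp
  show "x_dup A B (of_int p / of_int q) = of_int (dup_num A B p q) / of_int (dup_den A B p q)"
    using assms(1) unfolding num den x_dup_def t_def[symmetric] by simp
qed

text \<open>The discriminant is the resultant of the two quartic forms; these identities certify it.\<close>

lemma dup_resultant_identities:
  fixes A B p q :: int
  defines "\<Delta> \<equiv> 4*A^3 + 27*B^2"
  shows "binary_form [0, 12, 0, 16*A] p q * dup_num A B p q
           + binary_form [-3, 0, 5*A, 27*B] p q * dup_den A B p q = 4*\<Delta>*q^7"
    and "binary_form [4*\<Delta>, -4*A^2*B, 4*A*(3*A^3+22*B^2), 12*B*(A^3+8*B^2)] p q * dup_num A B p q
           + binary_form [A^2*B, A*(5*A^3+32*B^2), 2*B*(13*A^3+96*B^2), -3*A^2*(A^3+8*B^2)] p q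
             * dup_den A B p q = 4*\<Delta>*p^7"
  unfolding \<Delta>_def dup_num_def dup_den_def binary_form_cubic binary_form_quartic by algebra+

lemma gcd_dup_num_dup_den_dvd:
  fixes A B p q :: int
  assumes "coprime p q"
  shows "gcd (dup_num A B p q) (dup_den A B p q) dvd 4*(4*A^3 + 27*B^2)"
proof -
  define \<Delta> g where "\<Delta> = 4*A^3 + 27*B^2" and "g = gcd (dup_num A B p q) (dup_den A B p q)"
  have "g dvd binary_form [0, 12, 0, 16*A] p q * dup_num A B p q
           + binary_form [-3, 0, 5*A, 27*B] p q * dup_den A B p q"
    and "g dvd binary_form [4*\<Delta>, -4*A^2*B, 4*A*(3*A^3+22*B^2), 12*B*(A^3+8*B^2)] p q * dup_num A B p q
           + binary_form [A^2*B, A*(5*A^3+32*B^2), 2*B*(13*A^3+96*B^2), -3*A^2*(A^3+8*B^2)] p q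
             * dup_den A B p q"
    by (simp_all add: g_def)
  then have "g dvd 4*\<Delta>*q^7" "g dvd 4*\<Delta>*p^7"
    by (simp_all only: dup_resultant_identities \<Delta>_def)
  then have "g dvd gcd (4*\<Delta>*q^7) (4*\<Delta>*p^7)" by simp
  also have "gcd (4*\<Delta>*q^7) (4*\<Delta>*p^7) = \<bar>4*\<Delta>\<bar> * gcd (q^7) (p^7)"
    using gcd_mult_distrib_int[of "4*\<Delta>" "q^7" "p^7"] by (simp add: mult.assoc)
  also have "gcd (q^7) (p^7) = 1" using assms by (simp add: coprime_commute)
  finally show ?thesis by (simp add: \<Delta>_def g_def)
qed

lemma dup_forms_upper_bound:
  fixes A B :: int
  shows "\<exists>K. \<forall>p q. max \<bar>dup_num A B p q\<bar> \<bar>dup_den A B p q\<bar> \<le> K * (max \<bar>p\<bar> \<bar>q\<bar>) ^ 4"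
proof -
  define K1 K2 where "K1 = sum_list (map abs [1, 0, -2*A, -8*B, A^2])"
    and "K2 = sum_list (map abs [0, 4, 0, 4*A, 4*B])"
  have "max \<bar>dup_num A B p q\<bar> \<bar>dup_den A B p q\<bar> \<le> (K1 + K2) * (max \<bar>p\<bar> \<bar>q\<bar>) ^ 4" for p q
  proof -
    define m where "m = max \<bar>p\<bar> \<bar>q\<bar>"
    have "\<bar>p\<bar> \<le> m" "\<bar>q\<bar> \<le> m" by (simp_all add: m_def)
    from abs_binary_form_le[OF this, of "[1, 0, -2*A, -8*B, A^2]"]
      abs_binary_form_le[OF this, of "[0, 4, 0, 4*A, 4*B]"]
    have "\<bar>dup_num A B p q\<bar> \<le> K1 * m^4" "\<bar>dup_den A B p q\<bar> \<le> K2 * m^4"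
      unfolding dup_num_def dup_den_def K1_def K2_def by (simp_all add: eval_nat_numeral)
    moreover have "K1 * m^4 \<ge> 0" "K2 * m^4 \<ge> 0"
      unfolding K1_def K2_def by (intro mult_nonneg_nonneg sum_list_nonneg; auto)+
    ultimately show ?thesis unfolding m_def[symmetric] distrib_right max.bounded_iff by linarith
  qed
  then show ?thesis by blast
qed

lemma dup_forms_lower_bound:
  fixes A B :: int
  shows "\<exists>K. \<forall>p q. \<bar>4*(4*A^3 + 27*B^2)\<bar> * (max \<bar>p\<bar> \<bar>q\<bar>) ^ 4
                   \<le> K * max \<bar>dup_num A B p q\<bar> \<bar>dup_den A B p q\<bar>"
proof -
  define \<Delta> where "\<Delta> = 4*A^3 + 27*B^2"
  define U1 V1 U2 V2 where "U1 = [0, 12, 0, 16*A]" and "V1 = [-3, 0, 5*A, 27*B]"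
    and "U2 = [4*\<Delta>, -4*A^2*B, 4*A*(3*A^3+22*B^2), 12*B*(A^3+8*B^2)]"
    and "V2 = [A^2*B, A*(5*A^3+32*B^2), 2*B*(13*A^3+96*B^2), -3*A^2*(A^3+8*B^2)]"
  define s where "s cs = sum_list (map abs cs)" for cs :: "int list"
  define K where "K = s U1 + s V1 + s U2 + s V2"
  have "\<bar>4*\<Delta>\<bar> * (max \<bar>p\<bar> \<bar>q\<bar>) ^ 4 \<le> K * max \<bar>dup_num A B p q\<bar> \<bar>dup_den A B p q\<bar>" for p q
  proof -
    define m M where "m = max \<bar>p\<bar> \<bar>q\<bar>" and "M = max \<bar>dup_num A B p q\<bar> \<bar>dup_den A B p q\<bar>"
    have bounds: "\<bar>p\<bar> \<le> m" "\<bar>q\<bar> \<le> m" "\<bar>dup_num A B p q\<bar> \<le> M" "\<bar>dup_den A B p q\<bar> \<le> M"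
      by (simp_all add: m_def M_def)
    have s_nonneg: "0 \<le> s cs" for cs unfolding s_def by (induction cs) auto
    have "0 \<le> m^3 * M" using bounds by (simp add: order_trans[OF abs_ge_zero])
    then have K_bounds: "(s U1 + s V1) * m^3 * M \<le> K * m^3 * M" "(s U2 + s V2) * m^3 * M \<le> K * m^3 * M"
      using s_nonneg[of U1] s_nonneg[of V1] s_nonneg[of U2] s_nonneg[of V2]
      unfolding K_def mult.assoc by (auto intro!: mult_right_mono)
    have "\<bar>4*\<Delta>\<bar> * \<bar>q\<bar>^7 \<le> (s U1 + s V1) * m^3 * M"
      using abs_binary_form_combination_le[OF bounds, of U1 3 V1]
      unfolding U1_def V1_def dup_resultant_identities by (simp add: s_def \<Delta>_def abs_mult power_abs)
    then have q_le: "\<bar>4*\<Delta>\<bar> * \<bar>q\<bar>^7 \<le> K * m^3 * M" using K_bounds(1) by linarith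
    have "\<bar>4*\<Delta>\<bar> * \<bar>p\<bar>^7 \<le> (s U2 + s V2) * m^3 * M"
      using abs_binary_form_combination_le[OF bounds, of U2 3 V2]
      unfolding U2_def V2_def \<Delta>_def dup_resultant_identities by (simp add: s_def abs_mult power_abs)
    then have p_le: "\<bar>4*\<Delta>\<bar> * \<bar>p\<bar>^7 \<le> K * m^3 * M" using K_bounds(2) by linarith
    have "m = \<bar>p\<bar> \<or> m = \<bar>q\<bar>" by (auto simp: m_def max_def)
    then have "\<bar>4*\<Delta>\<bar> * m^7 \<le> K * m^3 * M" using p_le q_le by auto
    then have "m^3 * (\<bar>4*\<Delta>\<bar> * m^4) \<le> m^3 * (K * M)" by (simp add: algebra_simps eval_nat_numeral)
    moreover have "0 \<le> m" "0 \<le> K * M"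
      using bounds s_nonneg[of U1] s_nonneg[of V1] s_nonneg[of U2] s_nonneg[of V2]
      by (auto simp: K_def order_trans[OF abs_ge_zero])
    ultimately show ?thesis
      unfolding m_def[symmetric] M_def[symmetric] by (cases "m = 0") (auto simp: mult_le_cancel_left)
  qed
  then show ?thesis unfolding \<Delta>_def by blast
qed

theorem weil_height_x_dup:
  fixes A B :: int
  assumes "4*A^3 + 27*B^2 \<noteq> 0"
  obtains C where "C \<ge> 0"
    and "\<And>t. ec_rhs A B t \<noteq> 0 \<Longrightarrow> \<bar>weil_height (x_dup A B t) - 4 * weil_height t\<bar> \<le> C"
proof -
  obtain K where K: "\<And>p q. max \<bar>dup_num A B p q\<bar> \<bar>dup_den A B p q\<bar> \<le> K * (max \<bar>p\<bar> \<bar>q\<bar>) ^ 4"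
    using dup_forms_upper_bound by blast
  obtain K' where K': "\<And>p q. \<bar>4*(4*A^3 + 27*B^2)\<bar> * (max \<bar>p\<bar> \<bar>q\<bar>) ^ 4
                              \<le> K' * max \<bar>dup_num A B p q\<bar> \<bar>dup_den A B p q\<bar>"
    using dup_forms_lower_bound by blast
  have "\<bar>weil_height (x_dup A B t) - 4 * weil_height t\<bar> \<le> max (ln K) (ln K')"
    if "ec_rhs A B t \<noteq> 0" for t
  proof -
    obtain p q where pq: "quotient_of t = (p, q)" by (cases "quotient_of t")
    have "q > 0" "coprime p q" "t = of_int p / of_int q"
      using quotient_of_denom_pos[OF pq] quotient_of_coprime[OF pq] quotient_of_div[OF pq] by auto
    define m where "m = max \<bar>p\<bar> \<bar>q\<bar>"
    have "1 \<le> m" using \<open>q > 0\<close> by (simp add: m_def)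
    have "weil_height t = ln (real_of_int m)"
      using weil_height_quotient_of[OF pq] \<open>q > 0\<close> by (simp add: m_def)
    moreover have "dup_den A B p q \<noteq> 0"
      and "x_dup A B t = of_int (dup_num A B p q) / of_int (dup_den A B p q)"
      using x_dup_of_int_div[of q A B p] \<open>q > 0\<close> that \<open>t = _\<close> by auto
    moreover note weil_height_of_int_div_le_power[OF \<open>dup_den A B p q \<noteq> 0\<close> \<open>1 \<le> m\<close> K[of p q, folded m_def]]
      and weil_height_of_int_div_ge_power[OF \<open>dup_den A B p q \<noteq> 0\<close> \<open>1 \<le> m\<close> _
        gcd_dup_num_dup_den_dvd[OF \<open>coprime p q\<close>] K'[of p q, folded m_def]]
    ultimately have "weil_height (x_dup A B t) \<le> ln K + 4 * weil_height t"
      and "4 * weil_height t - ln K' \<le> weil_height (x_dup A B t)"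
      using assms by simp_all
    then show ?thesis
      using max.cobounded1[of "ln K" "ln K'"] max.cobounded2[of "ln K'" "ln K"] unfolding abs_le_iff by linarith
  qed
  then show thesis by (intro that[of "max 0 (max (ln K) (ln K'))"]) force+
qed

section \<open>The group law\<close>

lemma on_curve_ec_add_Pt:
  assumes P: "on_curve a b (Pt x1 y1)" and Q: "on_curve a b (Pt x2 y2)"
  shows "on_curve a b (ec_add a b (Pt x1 y1) (Pt x2 y2))"
proof -
  define c where "c l z = z^3 + a*z + b - (l*(z - x1) + y1)^2" for l z
  have third: "on_curve a b (Pt x3 (l*(x1 - x3) - y1))" if "c l x3 = 0" for l x3
    using that by (simp add: c_def power2_eq_square algebra_simps)
  have "c l x1 = 0" for l using P by (simp add: c_def)
  consider "x1 = x2" "y1 = -y2" | "x1 \<noteq> x2" | "x1 = x2" "y1 \<noteq> -y2" by blast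
  then show ?thesis
  proof cases
    case 1
    then show ?thesis by simp
  next
    case 2
    define l where "l = (y2 - y1) / (x2 - x1)"
    have "l * (x2 - x1) + y1 = y2" using 2 by (simp add: l_def)
    then have "c l x2 = 0" using Q by (simp add: c_def)
    have "c l (l^2 - x1 - x2) * (x1 - x2) = (l^2 - x1 - x2 - x2) * c l x1 - (l^2 - x1 - x2 - x1) * c l x2"
      unfolding c_def by algebra
    then have "c l (l^2 - x1 - x2) = 0" using 2 \<open>c l x1 = 0\<close> \<open>c l x2 = 0\<close> by simp
    then have "on_curve a b (Pt (l^2 - x1 - x2) (l * (x1 - (l^2 - x1 - x2)) - y1))" by (rule third)
    moreover have "ec_add a b (Pt x1 y1) (Pt x2 y2) = Pt (l^2 - x1 - x2) (l * (x1 - (l^2 - x1 - x2)) - y1)"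
      unfolding l_def using 2 by (simp add: Let_def)
    ultimately show ?thesis by (simp only:)
  next
    case 3
    have "(y1 - y2) * (y1 + y2) = 0" using P Q 3 by (simp add: algebra_simps power2_eq_square)
    then have "y1 = y2" "y1 \<noteq> 0" using 3 by auto
    define l where "l = (3 * x1^2 + a) / (2 * y1)"
    have "3 * x1^2 + a - 2 * l * y1 = 0" using \<open>y1 \<noteq> 0\<close> by (simp add: l_def)
    moreover have "c l (l^2 - 2*x1) = c l x1 + (3 * x1^2 + a - 2 * l * y1) * (l^2 - 2*x1 - x1)"
      unfolding c_def by algebra
    ultimately have "c l (l^2 - 2*x1) = 0" using \<open>c l x1 = 0\<close> by simp
    then have "on_curve a b (Pt (l^2 - 2*x1) (l * (x1 - (l^2 - 2*x1)) - y1))" by (rule third)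
    moreover have "ec_add a b (Pt x1 y1) (Pt x2 y2) = Pt (l^2 - 2*x1) (l * (x1 - (l^2 - 2*x1)) - y1)"
      unfolding l_def using 3 \<open>y1 = y2\<close> \<open>y1 \<noteq> 0\<close> by (simp add: Let_def)
    ultimately show ?thesis by (simp only:)
  qed
qed

lemma on_curve_ec_add:
  "on_curve a b P \<Longrightarrow> on_curve a b Q \<Longrightarrow> on_curve a b (ec_add a b P Q)"
  by (cases P; cases Q) (simp_all add: on_curve_ec_add_Pt del: ec_add.simps(3))

lemma on_curve_doubling_iterate:
  "on_curve a b P \<Longrightarrow> on_curve a b (((\<lambda>R. ec_add a b R R) ^^ n) P)"
  by (induction n) (simp_all add: on_curve_ec_add)

section \<open>Canonical heights on quadratic twists\<close>

lemma tate_telescoping: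
  fixes h :: "nat \<Rightarrow> real"
  assumes "b > 1" and step: "\<And>n. \<bar>h (Suc n) - b * h n\<bar> \<le> C"
  shows "\<exists>L. (\<lambda>n. h n / b^n) \<longlonglongrightarrow> L \<and> \<bar>L - h 0\<bar> \<le> C / (b - 1)"
proof -
  define d where "d n = h (Suc n) / b^Suc n - h n / b^n" for n
  have d_le: "\<bar>d n\<bar> \<le> C / b * (1 / b)^n" for n
  proof -
    have "d n = (h (Suc n) - b * h n) / b^Suc n" using \<open>b > 1\<close> by (simp add: d_def field_simps)
    then have "\<bar>d n\<bar> = \<bar>h (Suc n) - b * h n\<bar> / b^Suc n" using \<open>b > 1\<close> by simp
    also have "\<dots> \<le> C / b^Suc n" using step[of n] \<open>b > 1\<close> by (intro divide_right_mono) auto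
    also have "\<dots> = C / b * (1 / b)^n" by (simp add: power_divide)
    finally show ?thesis .
  qed
  have "(\<lambda>n. C / b * (1 / b)^n) sums (C / b * (1 / (1 - 1 / b)))"
    using \<open>b > 1\<close> by (intro sums_mult geometric_sums) auto
  also have "C / b * (1 / (1 - 1 / b)) = C / (b - 1)" using \<open>b > 1\<close> by (simp add: field_simps)
  finally have geom': "(\<lambda>n. C / b * (1 / b)^n) sums (C / (b - 1))" .
  have "summable (\<lambda>n. \<bar>d n\<bar>)"
    by (rule summable_comparison_test'[OF sums_summable[OF geom']]) (use d_le in auto)
  then have "summable d" by (rule summable_rabs_cancel)
  have partial: "h n / b^n = h 0 + (\<Sum>k<n. d k)" for n
    by (induction n) (simp_all add: d_def)
  have "(\<lambda>n. h n / b^n) \<longlonglongrightarrow> h 0 + suminf d"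
    unfolding partial by (intro tendsto_add tendsto_const summable_LIMSEQ \<open>summable d\<close>)
  moreover have "\<bar>suminf d\<bar> \<le> C / (b - 1)"
  proof -
    have "\<bar>suminf d\<bar> \<le> (\<Sum>n. \<bar>d n\<bar>)" by (rule summable_rabs) fact
    also have "\<dots> \<le> C / (b - 1)"
      by (rule sums_le[OF d_le summable_sums geom']) fact
    finally show ?thesis .
  qed
  ultimately show ?thesis by (intro exI[of _ "h 0 + suminf d"]) simp
qed

locale twisted_curve =
  fixes A B D :: int and a b :: rat
  assumes D_pos: "D > 0" and a_eq: "a = of_int (D^2 * A)" and b_eq: "b = of_int (D^3 * B)"
begin

lemma on_curve_iff_ec_rhs:
  "on_curve a b (Pt x y) \<longleftrightarrow> y^2 = of_int D ^ 3 * ec_rhs A B (x / of_int D)"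
proof -
  have "of_int D ^ 3 * ec_rhs A B (x / of_int D) = x^3 + a * x + b"
    unfolding ec_rhs_def a_eq b_eq using D_pos by (simp add: field_simps power_divide eval_nat_numeral)
  then show ?thesis by simp
qed

lemma doubling_x_dup:
  assumes "on_curve a b (Pt x y)" "y \<noteq> 0"
  shows "\<exists>y'. ec_add a b (Pt x y) (Pt x y) = Pt (of_int D * x_dup A B (x / of_int D)) y'"
proof -
  define d where "d = (of_int D :: rat)"
  have "d \<noteq> 0" using D_pos by (simp add: d_def)
  have curve: "y^2 = x^3 + d^2 * of_int A * x + d^3 * of_int B"
    using assms(1) by (simp add: a_eq b_eq d_def)
  have rhs: "y^2 = d^3 * ec_rhs A B (x / d)" using assms(1) on_curve_iff_ec_rhs by (simp add: d_def)
  then have "ec_rhs A B (x / d) \<noteq> 0" using assms(2) by auto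
  have "((3 * x^2 + a) / (2 * y))^2 - 2 * x = ((3 * x^2 + a)^2 - 8 * x * y^2) / (4 * y^2)"
    using assms(2) by (simp add: field_simps power2_eq_square)
  also have "(3 * x^2 + a)^2 - 8 * x * y^2
      = d^4 * ((x/d)^4 - 2 * of_int A * (x/d)^2 - 8 * of_int B * (x/d) + of_int A ^ 2)"
    unfolding curve using \<open>d \<noteq> 0\<close>
    by (simp add: a_eq d_def field_simps power_divide) (simp add: algebra_simps eval_nat_numeral)
  also have "d^4 * ((x/d)^4 - 2 * of_int A * (x/d)^2 - 8 * of_int B * (x/d) + of_int A ^ 2) / (4 * y^2)
      = d * x_dup A B (x / d)"
    unfolding rhs x_dup_def using \<open>d \<noteq> 0\<close> \<open>ec_rhs A B (x / d) \<noteq> 0\<close>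
    by (simp add: field_simps eval_nat_numeral)
  finally show ?thesis using assms(2) by (simp add: Let_def d_def)
qed

lemma doubling_orbit:
  fixes x y :: rat
  defines "t \<equiv> \<lambda>n. (x_dup A B ^^ n) (x / of_int D)"
  assumes "on_curve a b (Pt x y)" and "\<forall>k<n. ec_rhs A B (t k) \<noteq> 0"
  shows "\<exists>y'. ((\<lambda>R. ec_add a b R R) ^^ n) (Pt x y) = Pt (of_int D * t n) y'"
  using assms(3)
proof (induction n)
  case 0
  show ?case using D_pos by (simp add: t_def)
next
  case (Suc n)
  then obtain y' where y': "((\<lambda>R. ec_add a b R R) ^^ n) (Pt x y) = Pt (of_int D * t n) y'" by auto
  have on_curve: "on_curve a b (Pt (of_int D * t n) y')"
    using on_curve_doubling_iterate[OF assms(2), of n] y' by simp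
  have "y'^2 = of_int D ^ 3 * ec_rhs A B (t n)"
    using on_curve D_pos unfolding on_curve_iff_ec_rhs by simp
  then have "y' \<noteq> 0" using Suc.prems D_pos by auto
  then show ?case
    using doubling_x_dup[OF on_curve] y' D_pos by (simp add: t_def)
qed

lemma can_height_eq_0_if_ec_rhs_root:
  fixes x y :: rat
  defines "t \<equiv> \<lambda>n. (x_dup A B ^^ n) (x / of_int D)"
  assumes "on_curve a b (Pt x y)" and "ec_rhs A B (t j) = 0"
  shows "can_height a b (Pt x y) = 0"
proof -
  define dbl where "dbl = (\<lambda>R. ec_add a b R R)"
  obtain k where k: "ec_rhs A B (t k) = 0" and before: "\<forall>i<k. ec_rhs A B (t i) \<noteq> 0"
    using assms(3) exists_least_iff[of "\<lambda>k. ec_rhs A B (t k) = 0"] by auto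
  obtain y' where y': "(dbl ^^ k) (Pt x y) = Pt (of_int D * t k) y'"
    using doubling_orbit[OF assms(2)] before unfolding t_def dbl_def by blast
  have "on_curve a b (Pt (of_int D * t k) y')"
    using on_curve_doubling_iterate[OF assms(2), of k] y' by (simp add: dbl_def)
  then have "y' = 0" using k D_pos unfolding on_curve_iff_ec_rhs by simp
  then have "(dbl ^^ (Suc k + m)) (Pt x y) = Inf" for m
    using y' by (induction m) (simp_all add: dbl_def)
  then have "\<forall>\<^sub>F n in sequentially. x_height ((dbl ^^ n) (Pt x y)) / 4^n = 0"
    unfolding eventually_sequentially by (metis le_add_diff_inverse x_height.simps(1) div_0)
  then have "(\<lambda>n. x_height ((dbl ^^ n) (Pt x y)) / 4^n) \<longlonglongrightarrow> 0"
    by (rule tendsto_eventually)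
  then show ?thesis unfolding can_height_def dbl_def[symmetric] by (rule limI)
qed

lemma can_height_eq_limit:
  fixes x y :: rat
  defines "t \<equiv> \<lambda>n. (x_dup A B ^^ n) (x / of_int D)"
  assumes "on_curve a b (Pt x y)" and "\<forall>k. ec_rhs A B (t k) \<noteq> 0"
    and "(\<lambda>n. weil_height (t n) / 4^n) \<longlonglongrightarrow> L"
  shows "can_height a b (Pt x y) = L"
proof -
  define dbl where "dbl = (\<lambda>R. ec_add a b R R)"
  have x_height: "x_height ((dbl ^^ n) (Pt x y)) = weil_height (of_int D * t n)" for n
    using doubling_orbit[OF assms(2), of n] assms(3) unfolding t_def dbl_def by force
  have "(\<lambda>n. (weil_height (of_int D * t n) - weil_height (t n)) / 4^n) \<longlonglongrightarrow> 0"
  proof (rule tendsto_0_le[of "\<lambda>n. (1/4::real)^n" _ _ "ln (real_of_int D)"])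
    show "(\<lambda>n. (1/4::real)^n) \<longlonglongrightarrow> 0" by (rule LIMSEQ_power_zero) simp
    have "\<bar>weil_height (of_int D * t n) - weil_height (t n)\<bar> / 4^n \<le> ln (real_of_int D) / 4^n" for n
      using weil_height_of_int_mult[of D "t n"] D_pos by (intro divide_right_mono) auto
    then show "\<forall>\<^sub>F n in sequentially. norm ((weil_height (of_int D * t n) - weil_height (t n)) / 4^n)
        \<le> norm ((1/4::real)^n) * ln (real_of_int D)"
      by (simp add: power_divide)
  qed
  from tendsto_add[OF assms(4) this]
  have "(\<lambda>n. x_height ((dbl ^^ n) (Pt x y)) / 4^n) \<longlonglongrightarrow> L"
    by (simp add: x_height diff_divide_distrib)
  then show ?thesis unfolding can_height_def dbl_def[symmetric] by (rule limI)
qed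

lemma can_height_near_weil_height:
  assumes "on_curve a b (Pt x y)"
    and x_dup_bound: "\<And>t. ec_rhs A B t \<noteq> 0 \<Longrightarrow> \<bar>weil_height (x_dup A B t) - 4 * weil_height t\<bar> \<le> C"
  shows "can_height a b (Pt x y) = 0 \<or> \<bar>can_height a b (Pt x y) - weil_height (x / of_int D)\<bar> \<le> C / 3"
proof (cases "\<exists>k. ec_rhs A B ((x_dup A B ^^ k) (x / of_int D)) = 0")
  case True
  then show ?thesis using can_height_eq_0_if_ec_rhs_root[OF assms(1)] by blast
next
  case False
  define h where "h n = weil_height ((x_dup A B ^^ n) (x / of_int D))" for n
  have "\<bar>h (Suc n) - 4 * h n\<bar> \<le> C" for n
    using x_dup_bound False by (simp add: h_def)
  then obtain L where "(\<lambda>n. h n / 4^n) \<longlonglongrightarrow> L" "\<bar>L - h 0\<bar> \<le> C / 3"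
    using tate_telescoping[of 4 h C] by auto
  then show ?thesis using can_height_eq_limit[OF assms(1)] False by (auto simp: h_def)
qed

lemma integral_point_twisted:
  assumes "integral_point a b P"
  obtains X Y where "P = Pt (of_int X) (of_int Y)" and "Y^2 = X^3 + D^2*A*X + D^3*B"
proof -
  obtain x y where P: "P = Pt x y" "x \<in> \<int>" "y \<in> \<int>" "on_curve a b P"
    using assms unfolding integral_point_def by blast
  then obtain X Y where "x = of_int X" "y = of_int Y" by (auto elim!: Ints_cases)
  with P(1,4) have "rat_of_int (Y^2) = rat_of_int (X^3 + D^2*A*X + D^3*B)"
    by (simp add: a_eq b_eq)
  then show ?thesis using that P(1) \<open>x = _\<close> \<open>y = _\<close> by (simp only: of_int_eq_iff)
qed

end

section \<open>Integral points\<close>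

lemma abs_gt_square_if_weil_height_gt:
  fixes X D :: int
  assumes "0 < D" "2 * ln (real_of_int D) < weil_height (of_int X / of_int D)"
  shows "D^2 < \<bar>X\<bar>"
proof (rule ccontr)
  assume "\<not> D^2 < \<bar>X\<bar>"
  then have "max \<bar>X\<bar> \<bar>D\<bar> \<le> D^2" using assms(1) by (auto simp: power2_eq_square)
  then have "real_of_int (max \<bar>X\<bar> \<bar>D\<bar>) \<le> real_of_int D ^ 2" by (metis of_int_le_iff of_int_power)
  moreover have "max \<bar>X\<bar> \<bar>D\<bar> > 0" using assms(1) by auto
  ultimately have "ln (real_of_int (max \<bar>X\<bar> \<bar>D\<bar>)) \<le> 2 * ln (real_of_int D)"
    using assms(1) by (metis ln_le_cancel_iff ln_realpow of_int_0_less_iff zero_less_power of_nat_numeral)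
  moreover have "weil_height (of_int X / of_int D) \<le> ln (real_of_int (max \<bar>X\<bar> \<bar>D\<bar>) / real_of_int 1)"
    using assms(1) by (intro weil_height_of_int_div_le) auto
  ultimately show False using assms(2) by simp
qed

lemma twisted_curve_large_x:
  fixes A B D X Y :: int
  assumes "0 < D" "4 * \<bar>A\<bar> \<le> D^2" "4 * \<bar>B\<bar> \<le> D^3" "D^2 < \<bar>X\<bar>"
    and curve: "Y^2 = X^3 + D^2*A*X + D^3*B"
  shows "0 < X" and "Y^2 \<le> 2 * X^3"
proof -
  have "D^2 * D^2 \<le> \<bar>X\<bar> * \<bar>X\<bar>" "D^2 * (D^2 * D^2) \<le> \<bar>X\<bar> * (\<bar>X\<bar> * \<bar>X\<bar>)"
    using assms(4) by (intro mult_mono; simp)+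
  then have X4: "D^4 \<le> X^2" and X6: "D^6 \<le> \<bar>X\<bar>^3" by (simp_all add: power2_eq_square eval_nat_numeral)
  have AX: "4 * \<bar>D^2*A*X\<bar> \<le> \<bar>X\<bar>^3"
  proof -
    have "4 * \<bar>D^2*A*X\<bar> = (4 * \<bar>A\<bar>) * (D^2 * \<bar>X\<bar>)" by (simp add: abs_mult)
    also have "\<dots> \<le> D^2 * (D^2 * \<bar>X\<bar>)" using assms(2) by (intro mult_right_mono) auto
    also have "\<dots> = D^4 * \<bar>X\<bar>" by (simp add: eval_nat_numeral)
    also have "\<dots> \<le> X^2 * \<bar>X\<bar>" using X4 by (intro mult_right_mono) auto
    also have "\<dots> = \<bar>X\<bar>^3" by (simp add: eval_nat_numeral)
    finally show ?thesis .
  qed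
  have BX: "4 * \<bar>D^3*B\<bar> \<le> \<bar>X\<bar>^3"
  proof -
    have "4 * \<bar>D^3*B\<bar> = (4 * \<bar>B\<bar>) * D^3" using assms(1) by (simp add: abs_mult)
    also have "\<dots> \<le> D^3 * D^3" using assms(1,3) by (intro mult_right_mono) auto
    also have "\<dots> = D^6" by (simp add: eval_nat_numeral)
    finally show ?thesis using X6 by linarith
  qed
  have "\<bar>X\<bar>^3 > 0" using assms(1,4) by auto
  show "0 < X"
  proof (rule ccontr)
    assume "\<not> 0 < X"
    then have "X^3 = - (\<bar>X\<bar>^3)" by (simp add: eval_nat_numeral)
    then show False using curve AX BX \<open>\<bar>X\<bar>^3 > 0\<close> zero_le_power2[of Y] by linarith
  qed
  then show "Y^2 \<le> 2 * X^3"
    using curve AX BX abs_ge_self[of "D^2*A*X"] abs_ge_self[of "D^3*B"] by simp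
qed

lemma dvd_chord_numerator:
  fixes g X Y X' Y' A B D :: int
  assumes "g dvd X" "g dvd D"
    and curve: "Y^2 = X^3 + D^2*A*X + D^3*B" and curve': "Y'^2 = X'^3 + D^2*A*X' + D^3*B"
  shows "g dvd (Y' - Y)^2 - (X + X') * (X' - X)^2"
proof -
  have "g^2 * g dvd D^2 * X" using assms(1,2) by (intro mult_dvd_mono) simp_all
  then have "g^3 dvd D^2*A*X" by (simp add: eval_nat_numeral mult.commute mult.left_commute dvd_mult)
  then have "g^3 dvd Y^2" unfolding curve using assms(1,2) by (intro dvd_add) simp_all
  then have "g^2 dvd Y^2" by (rule dvd_trans[rotated]) (simp add: eval_nat_numeral)
  then have "g dvd Y" by simp
  have "(Y' - Y)^2 - (X + X') * (X' - X)^2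
      = D * (D*A*X' + D^2*B) + Y * (Y - 2*Y') + X * (X'^2 + X*X' - X^2)"
    using curve' by algebra
  then show ?thesis using assms(1,2) \<open>g dvd Y\<close> by (simp add: dvd_add dvd_mult2)
qed

lemma chord_terms_le:
  fixes X Y X' Y' D :: int
  assumes "0 < D" "D < X'" "X' < X" "Y^2 \<le> 2 * X^3" "Y'^2 \<le> 2 * X'^3"
  shows "max \<bar>(Y' - Y)^2 - (X + X') * (X' - X)^2\<bar> \<bar>D * (X' - X)^2\<bar> \<le> 10 * X^3"
proof -
  have "(X' - X)^2 \<le> X^2"
    using assms(1-3) by (intro power_mono_iff[THEN iffD2] power2_le_iff_abs_le[THEN iffD2]) auto
  have "X'^3 \<le> X^3" using assms(1-3) by (intro power_mono) auto
  have "(Y' - Y)^2 \<le> 2 * Y'^2 + 2 * Y^2"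
    using zero_le_power2[of "Y' + Y"] by (simp add: power2_eq_square algebra_simps)
  moreover have "0 \<le> (X + X') * (X' - X)^2" using assms(1-3) by simp
  moreover have "(X + X') * (X' - X)^2 \<le> 2 * X^3"
  proof -
    have "(X + X') * (X' - X)^2 \<le> (2 * X) * X^2"
      using assms(1-3) \<open>(X' - X)^2 \<le> X^2\<close> by (intro mult_mono) auto
    then show ?thesis by (simp add: eval_nat_numeral)
  qed
  ultimately have "\<bar>(Y' - Y)^2 - (X + X') * (X' - X)^2\<bar> \<le> 10 * X^3"
    using assms(4,5) \<open>X'^3 \<le> X^3\<close> zero_le_power2[of "Y' - Y"] unfolding abs_le_iff by linarith
  moreover have "\<bar>D * (X' - X)^2\<bar> \<le> X * X^2"
    using assms(1-3) \<open>(X' - X)^2 \<le> X^2\<close> by (simp add: abs_mult mult_mono)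
  moreover have "X * X^2 = X^3" "0 < X^3" using assms(1-3) by (simp_all add: eval_nat_numeral)
  ultimately show ?thesis by simp
qed

lemma weil_height_chord_le:
  fixes X Y X' Y' A B D :: int
  assumes "0 < D" "D < X'" "X' < X"
    and curve: "Y^2 = X^3 + D^2*A*X + D^3*B" and curve': "Y'^2 = X'^3 + D^2*A*X' + D^3*B"
    and "Y^2 \<le> 2 * X^3" "Y'^2 \<le> 2 * X'^3"
  shows "weil_height (of_int ((Y' - Y)^2 - (X + X') * (X' - X)^2) / of_int (D * (X' - X)^2))
           \<le> 3 * weil_height (of_int X / of_int D) + 2 * ln (real_of_int D) + ln 10"
proof -
  \<comment> \<open>cancelling \<open>g\<close> is what turns \<open>3 * ln X\<close> into \<open>3 * h(X/D) + 2 * ln D\<close>\<close>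
  define N g where "N = (Y' - Y)^2 - (X + X') * (X' - X)^2" and "g = gcd X D"
  have "0 < g" "g \<le> D" using assms(1) by (simp_all add: g_def zdvd_imp_le)
  have "D * (X' - X)^2 \<noteq> 0" using assms(1,3) by simp
  have "real_of_int (max \<bar>N\<bar> \<bar>D * (X' - X)^2\<bar>) \<le> 10 * real_of_int X ^ 3"
    using chord_terms_le[OF assms(1-3,6,7)] unfolding N_def
    by (metis of_int_le_iff of_int_mult of_int_numeral of_int_power)
  then have "real_of_int (max \<bar>N\<bar> \<bar>D * (X' - X)^2\<bar>) / g \<le> 10 * real_of_int X ^ 3 / g"
    using \<open>0 < g\<close> by (intro divide_right_mono) auto
  moreover have "max \<bar>N\<bar> \<bar>D * (X' - X)^2\<bar> > 0"
    using \<open>D * (X' - X)^2 \<noteq> 0\<close> by (simp add: less_max_iff_disj)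
  ultimately have "ln (real_of_int (max \<bar>N\<bar> \<bar>D * (X' - X)^2\<bar>) / g) \<le> ln (10 * real_of_int X ^ 3 / g)"
    using \<open>0 < g\<close> by (intro ln_mono) auto
  also have "\<dots> = ln 10 + 3 * (ln X - ln g) + 2 * ln g"
    using assms(1-3) \<open>0 < g\<close> by (simp add: ln_div ln_mult ln_realpow)
  also have "ln X - ln g = weil_height (of_int X / of_int D)"
    using assms(1-3) \<open>0 < g\<close> weil_height_of_int_div[of D X] by (simp add: g_def ln_div)
  also have "ln g \<le> ln D" using \<open>0 < g\<close> \<open>g \<le> D\<close> by simp
  finally have "ln (real_of_int (max \<bar>N\<bar> \<bar>D * (X' - X)^2\<bar>) / g)
      \<le> 3 * weil_height (of_int X / of_int D) + 2 * ln (real_of_int D) + ln 10" by simp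
  moreover have "g dvd N" using dvd_chord_numerator[OF _ _ curve curve'] by (simp add: g_def N_def)
  ultimately show ?thesis
    using weil_height_of_int_div_le[OF \<open>D * (X' - X)^2 \<noteq> 0\<close> \<open>0 < g\<close>]
    by (fastforce simp: N_def g_def)
qed

lemma weil_height_chord_le_max:
  fixes X Y X' Y' A B D :: int
  assumes "0 < D" "D < X" "D < X'" "X \<noteq> X'"
    and "Y^2 = X^3 + D^2*A*X + D^3*B" "Y'^2 = X'^3 + D^2*A*X' + D^3*B"
    and "Y^2 \<le> 2 * X^3" "Y'^2 \<le> 2 * X'^3"
  shows "weil_height (of_int ((Y' - Y)^2 - (X + X') * (X' - X)^2) / of_int (D * (X' - X)^2))
           \<le> 3 * max (weil_height (of_int X / of_int D)) (weil_height (of_int X' / of_int D))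
             + 2 * ln (real_of_int D) + ln 10"
proof (cases "X' < X")
  case True
  then have "weil_height (of_int ((Y' - Y)^2 - (X + X') * (X' - X)^2) / of_int (D * (X' - X)^2))
      \<le> 3 * weil_height (of_int X / of_int D) + 2 * ln (real_of_int D) + ln 10"
    using assms by (intro weil_height_chord_le) auto
  then show ?thesis
    using max.cobounded1[where a = "weil_height (of_int X / of_int D)" and b = "weil_height (of_int X' / of_int D)"]
    by linarith
next
  case False
  then have "X < X'" using assms(4) by simp
  have swap: "(Y - Y')^2 - (X' + X) * (X - X')^2 = (Y' - Y)^2 - (X + X') * (X' - X)^2"
    "D * (X - X')^2 = D * (X' - X)^2" by algebra+
  have "weil_height (of_int ((Y - Y')^2 - (X' + X) * (X - X')^2) / of_int (D * (X - X')^2))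
      \<le> 3 * weil_height (of_int X' / of_int D) + 2 * ln (real_of_int D) + ln 10"
    using assms \<open>X < X'\<close> by (intro weil_height_chord_le) auto
  then show ?thesis
    using max.cobounded2[where a = "weil_height (of_int X / of_int D)" and b = "weil_height (of_int X' / of_int D)"]
    unfolding swap by linarith
qed

section \<open>The angle bound\<close>

lemma angle_inequality:
  fixes u v s L :: real
  assumes "0 < L" "20 * L \<le> u" "20 * L \<le> v" "u \<le> 11/10 * v" "v \<le> 11/10 * u"
    and "s \<le> 3 * max u v + 21/10 * L"
  shows "(s - u - v) / (2 * sqrt (u * v)) \<le> 63/100"
proof -
  have ineq: "s - u - v \<le> 63/100 * (2 * sqrt (u * v))"
    if "0 < L" "20 * L \<le> u" "v \<le> u" "u \<le> 11/10 * v" "s \<le> 3 * u + 21/10 * L" for u v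
  proof -
    have "(95/100 * u)^2 \<le> u * v" using that by (simp add: power2_eq_square mult_left_mono)
    then have "95/100 * u \<le> sqrt (u * v)" by (rule real_le_rsqrt)
    moreover have "s - u - v \<le> 126/100 * (95/100 * u)" using that by linarith
    ultimately show ?thesis by linarith
  qed
  have "s - u - v \<le> 63/100 * (2 * sqrt (u * v))"
  proof (cases "v \<le> u")
    case True
    then show ?thesis using ineq assms by (simp add: max_def)
  next
    case False
    then show ?thesis using ineq[of v u] assms by (simp add: max_def mult.commute algebra_simps)
  qed
  moreover have "0 < sqrt (u * v)" using assms by simp
  ultimately show ?thesis by (simp add: divide_le_eq)
qed

locale large_twisted_curve = twisted_curve +
  fixes C :: real
  assumes C_nonneg: "0 \<le> C"
    and x_dup_bound: "\<And>t. ec_rhs A B t \<noteq> 0 \<Longrightarrow> \<bar>weil_height (x_dup A B t) - 4 * weil_height t\<bar> \<le> C"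
    and D_large: "4 * \<bar>A\<bar> + 4 * \<bar>B\<bar> < D"
    and ln_D_large: "40 * C / 3 + 10 * ln 10 \<le> ln (real_of_int D)"
    \<comment> \<open>makes the error term \<open>4 * C / 3 + ln 10\<close> of \<open>can_height_add_le\<close> at most \<open>ln D / 10\<close>\<close>
begin

lemma integral_point_large:
  assumes "integral_point a b P" and "20 * ln (real_of_int D) \<le> can_height a b P"
  obtains X Y where "P = Pt (of_int X) (of_int Y)" and "Y^2 = X^3 + D^2*A*X + D^3*B"
    and "D^2 < X" and "Y^2 \<le> 2 * X^3"
    and "weil_height (of_int X / of_int D) \<le> can_height a b P + C / 3"
proof -
  obtain X Y where P: "P = Pt (of_int X) (of_int Y)" and curve: "Y^2 = X^3 + D^2*A*X + D^3*B"
    using integral_point_twisted[OF assms(1)] .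
  have "0 < ln (real_of_int D)" using ln_D_large C_nonneg ln_gt_zero[of 10] by linarith
  then have "can_height a b P \<noteq> 0" using assms(2) by linarith
  then have near: "\<bar>can_height a b P - weil_height (of_int X / of_int D)\<bar> \<le> C / 3"
    using can_height_near_weil_height[OF _ x_dup_bound] assms(1) P
    unfolding integral_point_def by blast
  then have "2 * ln (real_of_int D) < weil_height (of_int X / of_int D)"
    using assms(2) ln_D_large C_nonneg \<open>0 < ln (real_of_int D)\<close> ln_gt_zero[of 10]
    unfolding abs_le_iff by linarith
  then have "D^2 < \<bar>X\<bar>" using D_pos by (rule abs_gt_square_if_weil_height_gt[rotated])
  moreover have "D \<le> D^2" "D^2 \<le> D^3" using D_pos by (simp_all add: power2_eq_square power3_eq_cube)
  ultimately have "0 < X" "Y^2 \<le> 2 * X^3"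
    using twisted_curve_large_x[OF D_pos _ _ _ curve] D_large by auto
  then have "D^2 < X" using \<open>D^2 < \<bar>X\<bar>\<close> by simp
  moreover have "weil_height (of_int X / of_int D) \<le> can_height a b P + C / 3"
    using near unfolding abs_le_iff by linarith
  ultimately show ?thesis by (intro that[OF P curve]) (use \<open>Y^2 \<le> 2 * X^3\<close> in auto)
qed

lemma can_height_add_le:
  assumes "integral_point a b P" "integral_point a b Q"
    and "20 * ln (real_of_int D) \<le> can_height a b P" "20 * ln (real_of_int D) \<le> can_height a b Q"
    and "xcoord P \<noteq> xcoord Q"
  shows "can_height a b (ec_add a b P Q)
           \<le> 3 * max (can_height a b P) (can_height a b Q) + 21/10 * ln (real_of_int D)"
proof -
  obtain X Y where P: "P = Pt (of_int X) (of_int Y)" and curve: "Y^2 = X^3 + D^2*A*X + D^3*B"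
    and "D^2 < X" "Y^2 \<le> 2 * X^3" and hP: "weil_height (of_int X / of_int D) \<le> can_height a b P + C / 3"
    using integral_point_large[OF assms(1,3)] .
  obtain X' Y' where Q: "Q = Pt (of_int X') (of_int Y')" and curve': "Y'^2 = X'^3 + D^2*A*X' + D^3*B"
    and "D^2 < X'" "Y'^2 \<le> 2 * X'^3" and hQ: "weil_height (of_int X' / of_int D) \<le> can_height a b Q + C / 3"
    using integral_point_large[OF assms(2,4)] .
  have "X \<noteq> X'" using assms(5) by (simp add: P Q)
  have "D \<le> D^2" using D_pos by (simp add: power2_eq_square)
  define l where "l = (of_int Y' - of_int Y) / (of_int X' - of_int X :: rat)"
  define x3 where "x3 = l^2 - of_int X - of_int X'"
  obtain y3 where sum: "ec_add a b P Q = Pt x3 y3"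
    using \<open>X \<noteq> X'\<close> by (simp add: P Q Let_def l_def x3_def)
  have "on_curve a b (ec_add a b P Q)"
    using assms(1,2) by (intro on_curve_ec_add) (auto simp: integral_point_def)
  then have "can_height a b (ec_add a b P Q) \<le> weil_height (x3 / of_int D) + C / 3"
    using can_height_near_weil_height[OF _ x_dup_bound] weil_height_nonneg[of "x3 / of_int D"] C_nonneg
    unfolding sum abs_le_iff by fastforce
  also have "x3 / of_int D = of_int ((Y' - Y)^2 - (X + X') * (X' - X)^2) / of_int (D * (X' - X)^2)"
  proof -
    have "(of_int X' - of_int X :: rat) \<noteq> 0" "(of_int D :: rat) \<noteq> 0" using \<open>X \<noteq> X'\<close> D_pos by auto
    then show ?thesis unfolding x3_def l_def by (simp add: field_simps power_divide)
  qed
  also have "weil_height \<dots> \<le> 3 * max (weil_height (of_int X / of_int D)) (weil_height (of_int X' / of_int D))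
      + 2 * ln (real_of_int D) + ln 10"
    using D_pos \<open>D^2 < X\<close> \<open>D^2 < X'\<close> \<open>D \<le> D^2\<close> \<open>Y^2 \<le> 2 * X^3\<close> \<open>Y'^2 \<le> 2 * X'^3\<close>
    by (intro weil_height_chord_le_max[OF _ _ _ \<open>X \<noteq> X'\<close> curve curve']) auto
  finally show ?thesis using hP hQ ln_D_large by (simp add: max_def split: if_splits)
qed

lemma cos_angle_le:
  assumes "integral_point a b P" "integral_point a b Q"
    and "20 * ln (real_of_int D) \<le> can_height a b P" "20 * ln (real_of_int D) \<le> can_height a b Q"
    and "xcoord P \<noteq> xcoord Q"
    and "max (can_height a b Q / can_height a b P) (can_height a b P / can_height a b Q) \<le> 11/10"
  shows "cos_angle a b P Q \<le> 63/100"
proof -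
  have "0 < ln (real_of_int D)" using ln_D_large C_nonneg ln_gt_zero[of 10] by linarith
  then have "0 < can_height a b P" "0 < can_height a b Q" using assms(3,4) by linarith+
  moreover have "can_height a b Q / can_height a b P \<le> 11/10 \<and> can_height a b P / can_height a b Q \<le> 11/10"
    using assms(6) unfolding max.bounded_iff .
  ultimately have "can_height a b P \<le> 11/10 * can_height a b Q" "can_height a b Q \<le> 11/10 * can_height a b P"
    by (simp_all add: divide_le_eq)
  then show ?thesis
    unfolding cos_angle_def
    using angle_inequality[OF \<open>0 < ln (real_of_int D)\<close> assms(3,4)] can_height_add_le[OF assms(1-5)]
    by blast
qed

end

lemma large_twisted_curveI:
  fixes A B D :: int
  assumes "0 \<le> C"
    and "\<And>t. ec_rhs A B t \<noteq> 0 \<Longrightarrow> \<bar>weil_height (x_dup A B t) - 4 * weil_height t\<bar> \<le> C"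
    and "\<lceil>exp (40 * C / 3 + 10 * ln 10)\<rceil> + 4 * \<bar>A\<bar> + 4 * \<bar>B\<bar> + 1 \<le> D"
  shows "large_twisted_curve A B D (of_int (D^2 * A)) (of_int (D^3 * B)) C"
proof -
  have "0 < exp (40 * C / 3 + 10 * ln 10)" by simp
  then have "0 < \<lceil>exp (40 * C / 3 + 10 * ln 10)\<rceil>" by linarith
  then have "4 * \<bar>A\<bar> + 4 * \<bar>B\<bar> < D" using assms(3) by linarith
  moreover have "exp (40 * C / 3 + 10 * ln 10) \<le> real_of_int D"
    using le_of_int_ceiling[of "exp (40 * C / 3 + 10 * ln 10)"] assms(3) by linarith
  then have "40 * C / 3 + 10 * ln 10 \<le> ln (real_of_int D)"
    using \<open>0 < exp _\<close> by (metis exp_le_cancel_iff exp_ln less_le_trans)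
  ultimately show ?thesis
    using assms(1,2) by unfold_locales auto
qed

theorem lemma7p1:
  fixes A B :: int
  assumes "4 * A^3 + 27 * B^2 \<noteq> 0"
  shows "\<exists>D0::int. \<forall>D::int. squarefree D \<and> D \<ge> D0 \<longrightarrow>
    (let a = of_int (D^2 * A) :: rat; b = of_int (D^3 * B) :: rat in
     \<forall>P Q. integral_point a b P \<and> integral_point a b Q
       \<and> 20 * ln (real_of_int D) \<le> can_height a b P \<and> can_height a b P \<le> 2200 * ln (real_of_int D)
       \<and> 20 * ln (real_of_int D) \<le> can_height a b Q \<and> can_height a b Q \<le> 2200 * ln (real_of_int D)
       \<and> xcoord P \<noteq> xcoord Q
       \<and> max (can_height a b Q / can_height a b P) (can_height a b P / can_height a b Q) \<le> 11/10
       \<longrightarrow> cos_angle a b P Q \<le> 63/100)"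
proof -
  obtain C where "0 \<le> C"
    and "\<And>t. ec_rhs A B t \<noteq> 0 \<Longrightarrow> \<bar>weil_height (x_dup A B t) - 4 * weil_height t\<bar> \<le> C"
    using weil_height_x_dup[OF assms] by blast
  then have "large_twisted_curve A B D (of_int (D^2 * A)) (of_int (D^3 * B)) C"
    if "\<lceil>exp (40 * C / 3 + 10 * ln 10)\<rceil> + 4 * \<bar>A\<bar> + 4 * \<bar>B\<bar> + 1 \<le> D" for D
    using that by (rule large_twisted_curveI)
  then show ?thesis
    unfolding Let_def using large_twisted_curve.cos_angle_le by blast
qed

end
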